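(* Let $G$ be a two-player stage game and consider the pure-pure regime. There exist a positive integer $T$ and an SPE of $G(T)$ (in the pure-pure regime) in which locally suboptimal behavior occurs if and only if at least one of the following holds: (1) $|V_1^{p,p}|>1$, $|V_2^{p,p}|>1$, and there exist $\hat a_1\in A_1,\hat a_2\in A_2$ with $(\hat a_1,\hat a_2)\notin \mathrm{Nash}^{p,p}(G)$; (2) $|V_1^{p,p}|>1$, $|V_2^{p,p}|=1$, and there exist $\hat a_1,a_1'\in A_1$, $\hat a_2\in A_2$ with $u_1(\hat a_1,\hat a_2)<u_1(a_1',\hat a_2)$ and $\hat a_2$ a best response to $\hat a_1$; (3) $|V_1^{p,p}|=1$, $|V_2^{p,p}|>1$, and there exist $\hat a_1\in A_1$, $\hat a_2,a_2'\in A_2$ with $u_2(\hat a_1,\hat a_2)<u_2(\hat a_1,a_2')$ and $\hat a_1$ a best response to $\hat a_2$.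
   Context: A two-player stage game $G$ consists of finite nonempty action sets $A_1,A_2$ and payoff functions $u_1,u_2:A_1\times A_2\to\mathbb{R}$. An action $a_i$ is a best response to the opponent's action if it maximizes player $i$'s payoff against it. For an integer $T\ge 1$, $G(T)$ is the $T$-round repetition of $G$ in which after each round both realized actions are observed and each player's payoff is the sum of stage payoffs over the $T$ rounds. In the pure-pure regime, both players are restricted to pure strategies: a strategy of player $i$ in $G(T)$ is a map $\mu_i:\bigcup_{k=0}^{T-1}(A_1\times A_2)^k\to A_i$ from histories to actions, and deviations are restricted to such strategies. A strategy profile $\mu$ of $G(T)$ is a subgame-perfect equilibrium (SPE) if for every $0\le k<T$ and every history $h$ of length $k$, the continuation profile $\mu_{|h}$ (defined by $\mu_{i|h}(h')=\mu_i(h,h')$) is a Nash equilibrium of $G(T-k)$. $\mathrm{Nash}^{p,p}(G)$ is the set of pure action profiles of $G$ that are Nash equilibria (no player gains by a unilateral deviation to another action), and $V_i^{p,p}=\{u_i(a):a\in\mathrm{Nash}^{p,p}(G)\}$. Locally suboptimal behavior occurs in an SPE $\mu$ of $G(T)$ if there exist $0\le k<T$ and a history $h$ of length $k$ with $(\mu_1(h),\mu_2(h))\notin\mathrm{Nash}^{p,p}(G)$. *)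

theory Defs
  imports Main "HOL.Real"
begin

text \<open>Histories are lists of realized action profiles (oldest first).
  Pure strategies of G(T) are functions from histories to actions; only their values on
  histories of length < T with entries in A1 x A2 matter, and there they must lie in A_i.\<close>

definition nash_pp :: "'a set \<Rightarrow> 'b set \<Rightarrow> ('a \<Rightarrow> 'b \<Rightarrow> real) \<Rightarrow> ('a \<Rightarrow> 'b \<Rightarrow> real) \<Rightarrow> ('a \<times> 'b) set" where
  "nash_pp A1 A2 u1 u2 = {(a1, a2). a1 \<in> A1 \<and> a2 \<in> A2 \<and>
      (\<forall>b1\<in>A1. u1 b1 a2 \<le> u1 a1 a2) \<and> (\<forall>b2\<in>A2. u2 a1 b2 \<le> u2 a1 a2)}"

definition V1_pp :: "'a set \<Rightarrow> 'b set \<Rightarrow> ('a \<Rightarrow> 'b \<Rightarrow> real) \<Rightarrow> ('a \<Rightarrow> 'b \<Rightarrow> real) \<Rightarrow> real set" where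
  "V1_pp A1 A2 u1 u2 = (\<lambda>(a1, a2). u1 a1 a2) ` nash_pp A1 A2 u1 u2"

definition V2_pp :: "'a set \<Rightarrow> 'b set \<Rightarrow> ('a \<Rightarrow> 'b \<Rightarrow> real) \<Rightarrow> ('a \<Rightarrow> 'b \<Rightarrow> real) \<Rightarrow> real set" where
  "V2_pp A1 A2 u1 u2 = (\<lambda>(a1, a2). u2 a1 a2) ` nash_pp A1 A2 u1 u2"

definition best_resp1 :: "'a set \<Rightarrow> ('a \<Rightarrow> 'b \<Rightarrow> real) \<Rightarrow> 'a \<Rightarrow> 'b \<Rightarrow> bool" where
  "best_resp1 A1 u1 a1 a2 \<longleftrightarrow> a1 \<in> A1 \<and> (\<forall>b1\<in>A1. u1 b1 a2 \<le> u1 a1 a2)"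

definition best_resp2 :: "'b set \<Rightarrow> ('a \<Rightarrow> 'b \<Rightarrow> real) \<Rightarrow> 'a \<Rightarrow> 'b \<Rightarrow> bool" where
  "best_resp2 A2 u2 a1 a2 \<longleftrightarrow> a2 \<in> A2 \<and> (\<forall>b2\<in>A2. u2 a1 b2 \<le> u2 a1 a2)"

definition histories :: "'a set \<Rightarrow> 'b set \<Rightarrow> nat \<Rightarrow> ('a \<times> 'b) list set" where
  "histories A1 A2 k = {h. length h = k \<and> set h \<subseteq> A1 \<times> A2}"

definition strategy :: "'a set \<Rightarrow> 'b set \<Rightarrow> 'c set \<Rightarrow> nat \<Rightarrow> (('a \<times> 'b) list \<Rightarrow> 'c) \<Rightarrow> bool" where
  "strategy A1 A2 Ai T \<mu> \<longleftrightarrow> (\<forall>k<T. \<forall>h\<in>histories A1 A2 k. \<mu> h \<in> Ai)"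

fun play :: "(('a \<times> 'b) list \<Rightarrow> 'a) \<Rightarrow> (('a \<times> 'b) list \<Rightarrow> 'b) \<Rightarrow> nat \<Rightarrow> ('a \<times> 'b) list" where
  "play \<mu>1 \<mu>2 0 = []"
| "play \<mu>1 \<mu>2 (Suc k) = (let h = play \<mu>1 \<mu>2 k in h @ [(\<mu>1 h, \<mu>2 h)])"

definition payoff :: "('a \<Rightarrow> 'b \<Rightarrow> real) \<Rightarrow> nat \<Rightarrow> (('a \<times> 'b) list \<Rightarrow> 'a) \<Rightarrow> (('a \<times> 'b) list \<Rightarrow> 'b) \<Rightarrow> real" where
  "payoff u T \<mu>1 \<mu>2 = (\<Sum>(a1, a2) \<leftarrow> play \<mu>1 \<mu>2 T. u a1 a2)"

text \<open>Nash equilibrium of G(T), pure-pure regime (deviations to pure strategies only).\<close>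
definition nash_rep :: "'a set \<Rightarrow> 'b set \<Rightarrow> ('a \<Rightarrow> 'b \<Rightarrow> real) \<Rightarrow> ('a \<Rightarrow> 'b \<Rightarrow> real) \<Rightarrow> nat
     \<Rightarrow> (('a \<times> 'b) list \<Rightarrow> 'a) \<Rightarrow> (('a \<times> 'b) list \<Rightarrow> 'b) \<Rightarrow> bool" where
  "nash_rep A1 A2 u1 u2 T \<mu>1 \<mu>2 \<longleftrightarrow>
     strategy A1 A2 A1 T \<mu>1 \<and> strategy A1 A2 A2 T \<mu>2 \<and>
     (\<forall>\<sigma>1. strategy A1 A2 A1 T \<sigma>1 \<longrightarrow> payoff u1 T \<sigma>1 \<mu>2 \<le> payoff u1 T \<mu>1 \<mu>2) \<and>
     (\<forall>\<sigma>2. strategy A1 A2 A2 T \<sigma>2 \<longrightarrow> payoff u2 T \<mu>1 \<sigma>2 \<le> payoff u2 T \<mu>1 \<mu>2)"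

definition spe :: "'a set \<Rightarrow> 'b set \<Rightarrow> ('a \<Rightarrow> 'b \<Rightarrow> real) \<Rightarrow> ('a \<Rightarrow> 'b \<Rightarrow> real) \<Rightarrow> nat
     \<Rightarrow> (('a \<times> 'b) list \<Rightarrow> 'a) \<Rightarrow> (('a \<times> 'b) list \<Rightarrow> 'b) \<Rightarrow> bool" where
  "spe A1 A2 u1 u2 T \<mu>1 \<mu>2 \<longleftrightarrow>
     strategy A1 A2 A1 T \<mu>1 \<and> strategy A1 A2 A2 T \<mu>2 \<and>
     (\<forall>k<T. \<forall>h\<in>histories A1 A2 k.
        nash_rep A1 A2 u1 u2 (T - k) (\<lambda>h'. \<mu>1 (h @ h')) (\<lambda>h'. \<mu>2 (h @ h')))"

definition locally_suboptimal :: "'a set \<Rightarrow> 'b set \<Rightarrow> ('a \<Rightarrow> 'b \<Rightarrow> real) \<Rightarrow> ('a \<Rightarrow> 'b \<Rightarrow> real) \<Rightarrow> nat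
     \<Rightarrow> (('a \<times> 'b) list \<Rightarrow> 'a) \<Rightarrow> (('a \<times> 'b) list \<Rightarrow> 'b) \<Rightarrow> bool" where
  "locally_suboptimal A1 A2 u1 u2 T \<mu>1 \<mu>2 \<longleftrightarrow>
     (\<exists>k<T. \<exists>h\<in>histories A1 A2 k. (\<mu>1 h, \<mu>2 h) \<notin> nash_pp A1 A2 u1 u2)"

end

theory Submission
  imports Defs
begin

text \<open>
  Backward induction: if all later play is Nash, a player whose Nash payoffs take a single value w
  receives exactly w per remaining round whatever he does today, so today he must best-respond.
  Hence, if every profile in which such players best-respond (an admissible profile) is Nash,
  every SPE plays Nash after every history. Conversely, an admissible non-Nash profile can be
  played in round one and enforced by conditioning the continuation on the first-round outcome:
  a player with two different Nash payoffs faces m rounds of his better versus his worse Nash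
  equilibrium, which outweighs any one-shot gain once m is large, while a player with a single
  Nash payoff already best-responds. The three conditions of the theorem say precisely that an
  admissible non-Nash profile exists.
\<close>

lemma eventually_le_multiple:
  fixes f :: "'c \<Rightarrow> real"
  assumes "finite B" "0 < d"
  shows "\<forall>\<^sub>F m in sequentially. \<forall>b\<in>B. f b \<le> real m * d"
proof (intro eventually_ball_finite ballI)
  fix b
  obtain n where n: "f b < real n * d" using ex_less_of_nat_mult \<open>0 < d\<close> by blast
  have "f b \<le> real m * d" if "n \<le> m" for m
  proof -
    have "real n * d \<le> real m * d" using that \<open>0 < d\<close> by (simp add: mult_right_mono)
    then show ?thesis using n by linarith
  qed
  then show "\<forall>\<^sub>F m in sequentially. f b \<le> real m * d"
    unfolding eventually_sequentially by blast
qed (rule assms(1))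

lemma card_gt_1_imp_less:
  fixes S :: "'c :: linorder set"
  assumes "finite S" "1 < card S"
  shows "\<exists>x\<in>S. \<exists>y\<in>S. x < y"
proof -
  obtain x y where "x \<in> S" "y \<in> S" "x \<noteq> y"
    using assms card_le_Suc0_iff_eq[OF assms(1)] by auto
  then show ?thesis by (meson linorder_neqE)
qed

lemma sum_two_blocks: "(\<Sum>j<m + m. if j < m then a else b) = real m * a + real m * b"
proof -
  have "{..<m + m} \<inter> {j. j < m} = {..<m}" "{..<m + m} \<inter> - {j. j < m} = {m..<m + m}" by auto
  then show ?thesis by (simp add: sum.If_cases)
qed

lemma nash_pp_iff_best_resp:
  "(a1, a2) \<in> nash_pp A1 A2 u1 u2 \<longleftrightarrow> best_resp1 A1 u1 a1 a2 \<and> best_resp2 A2 u2 a1 a2"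
  by (auto simp: nash_pp_def best_resp1_def best_resp2_def)

lemma nash_pp_imp_best_resp:
  "x \<in> nash_pp A1 A2 u1 u2 \<Longrightarrow> best_resp1 A1 u1 (fst x) (snd x) \<and> best_resp2 A2 u2 (fst x) (snd x)"
  using nash_pp_iff_best_resp[of "fst x" "snd x"] by simp

lemma nash_pp_subset: "nash_pp A1 A2 u1 u2 \<subseteq> A1 \<times> A2"
  by (auto simp: nash_pp_def)

lemma not_nash_if_better_reply1:
  "a1' \<in> A1 \<Longrightarrow> u1 a1 a2 < u1 a1' a2 \<Longrightarrow> (a1, a2) \<notin> nash_pp A1 A2 u1 u2"
  by (force simp: nash_pp_def)

lemma not_nash_if_better_reply2:
  "a2' \<in> A2 \<Longrightarrow> u2 a1 a2 < u2 a1 a2' \<Longrightarrow> (a1, a2) \<notin> nash_pp A1 A2 u1 u2"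
  by (force simp: nash_pp_def)

lemma finite_V1_pp: "finite A1 \<Longrightarrow> finite A2 \<Longrightarrow> finite (V1_pp A1 A2 u1 u2)"
  unfolding V1_pp_def using nash_pp_subset finite_subset by (metis finite_SigmaI finite_imageI)

lemma finite_V2_pp: "finite A1 \<Longrightarrow> finite A2 \<Longrightarrow> finite (V2_pp A1 A2 u1 u2)"
  unfolding V2_pp_def using nash_pp_subset finite_subset by (metis finite_SigmaI finite_imageI)

lemma nash_payoff1_eq_the_elem:
  assumes "(a1, a2) \<in> nash_pp A1 A2 u1 u2" "card (V1_pp A1 A2 u1 u2) = 1"
  shows "u1 a1 a2 = the_elem (V1_pp A1 A2 u1 u2)"
  using assms by (force simp: V1_pp_def card_1_singleton_iff)

lemma nash_payoff2_eq_the_elem: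
  assumes "(a1, a2) \<in> nash_pp A1 A2 u1 u2" "card (V2_pp A1 A2 u1 u2) = 1"
  shows "u2 a1 a2 = the_elem (V2_pp A1 A2 u1 u2)"
  using assms by (force simp: V2_pp_def card_1_singleton_iff)

lemma length_play [simp]: "length (play \<mu>1 \<mu>2 n) = n"
  by (induction n) (simp_all add: Let_def)

lemma play_Suc_Cons:
  "play \<mu>1 \<mu>2 (Suc n) =
     (\<mu>1 [], \<mu>2 []) # play (\<lambda>h. \<mu>1 ((\<mu>1 [], \<mu>2 []) # h)) (\<lambda>h. \<mu>2 ((\<mu>1 [], \<mu>2 []) # h)) n"
  by (induction n) (simp_all add: Let_def)

lemma payoff_0 [simp]: "payoff u 0 \<mu>1 \<mu>2 = 0"
  by (simp add: payoff_def)

lemma payoff_Suc: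
  "payoff u (Suc n) \<mu>1 \<mu>2 = payoff u n \<mu>1 \<mu>2 + u (\<mu>1 (play \<mu>1 \<mu>2 n)) (\<mu>2 (play \<mu>1 \<mu>2 n))"
  by (simp add: payoff_def Let_def)

lemma payoff_Suc_Cons:
  "payoff u (Suc n) \<mu>1 \<mu>2 =
     u (\<mu>1 []) (\<mu>2 []) + payoff u n (\<lambda>h. \<mu>1 ((\<mu>1 [], \<mu>2 []) # h)) (\<lambda>h. \<mu>2 ((\<mu>1 [], \<mu>2 []) # h))"
  unfolding payoff_def play_Suc_Cons by simp

lemma strategy_in_actions:
  "strategy A1 A2 Ai T \<mu> \<Longrightarrow> k < T \<Longrightarrow> h \<in> histories A1 A2 k \<Longrightarrow> \<mu> h \<in> Ai"
  by (simp add: strategy_def)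

lemma strategy_Nil: "strategy A1 A2 Ai (Suc T) \<mu> \<Longrightarrow> \<mu> [] \<in> Ai"
  by (simp add: strategy_in_actions[of _ _ _ _ _ 0] histories_def)

lemma strategy_Cons:
  assumes "strategy A1 A2 Ai (Suc T) \<sigma>" "c \<in> A1 \<times> A2"
  shows "strategy A1 A2 Ai T (\<lambda>h. \<sigma> (c # h))"
  unfolding strategy_def
proof (intro allI impI ballI)
  fix k h assume "k < T" "h \<in> histories A1 A2 k"
  then show "\<sigma> (c # h) \<in> Ai"
    using assms by (auto simp: strategy_def histories_def dest: spec[of _ "Suc k"])
qed

lemma play_in_histories:
  assumes "strategy A1 A2 A1 T \<mu>1" "strategy A1 A2 A2 T \<mu>2" "k \<le> T"
  shows "play \<mu>1 \<mu>2 k \<in> histories A1 A2 k"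
  using assms(3)
proof (induction k)
  case (Suc k)
  then have "\<mu>1 (play \<mu>1 \<mu>2 k) \<in> A1" "\<mu>2 (play \<mu>1 \<mu>2 k) \<in> A2"
    using strategy_in_actions[OF assms(1), of k] strategy_in_actions[OF assms(2), of k] by simp_all
  with Suc show ?case by (simp add: histories_def Let_def)
qed (simp add: histories_def)

lemma strategy_open_loop:
  "\<forall>j<T. g j \<in> Ai \<Longrightarrow> strategy A1 A2 Ai T (\<lambda>h. g (length h))"
  by (simp add: strategy_def histories_def)

lemma payoff_open_loop:
  "payoff u n (\<lambda>h. g1 (length h)) (\<lambda>h. g2 (length h)) = (\<Sum>j<n. u (g1 j) (g2 j))"
  by (induction n) (simp_all add: payoff_Suc)

lemma payoff_deviation_open_loop1:
  assumes \<sigma>: "strategy A1 A2 A1 n \<sigma>" and br: "\<forall>j<n. g2 j \<in> A2 \<and> best_resp1 A1 u1 (g1 j) (g2 j)"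
  shows "payoff u1 n \<sigma> (\<lambda>h. g2 (length h)) \<le> (\<Sum>j<n. u1 (g1 j) (g2 j))"
proof -
  have "payoff u1 k \<sigma> (\<lambda>h. g2 (length h)) \<le> (\<Sum>j<k. u1 (g1 j) (g2 j))" if "k \<le> n" for k
    using that
  proof (induction k)
    case (Suc k)
    let ?h = "play \<sigma> (\<lambda>h. g2 (length h)) k"
    have "?h \<in> histories A1 A2 k"
      using play_in_histories[OF \<sigma> strategy_open_loop] br Suc.prems by simp
    then have "\<sigma> ?h \<in> A1" using strategy_in_actions[OF \<sigma>, of k] Suc.prems by simp
    then have "u1 (\<sigma> ?h) (g2 k) \<le> u1 (g1 k) (g2 k)"
      using br Suc.prems by (simp add: best_resp1_def)
    with Suc show ?case by (simp add: payoff_Suc)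
  qed simp
  then show ?thesis by simp
qed

lemma payoff_deviation_open_loop2:
  assumes \<sigma>: "strategy A1 A2 A2 n \<sigma>" and br: "\<forall>j<n. g1 j \<in> A1 \<and> best_resp2 A2 u2 (g1 j) (g2 j)"
  shows "payoff u2 n (\<lambda>h. g1 (length h)) \<sigma> \<le> (\<Sum>j<n. u2 (g1 j) (g2 j))"
proof -
  have "payoff u2 k (\<lambda>h. g1 (length h)) \<sigma> \<le> (\<Sum>j<k. u2 (g1 j) (g2 j))" if "k \<le> n" for k
    using that
  proof (induction k)
    case (Suc k)
    let ?h = "play (\<lambda>h. g1 (length h)) \<sigma> k"
    have "?h \<in> histories A1 A2 k"
      using play_in_histories[OF strategy_open_loop \<sigma>] br Suc.prems by simp
    then have "\<sigma> ?h \<in> A2" using strategy_in_actions[OF \<sigma>, of k] Suc.prems by simp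
    then have "u2 (g1 k) (\<sigma> ?h) \<le> u2 (g1 k) (g2 k)"
      using br Suc.prems by (simp add: best_resp2_def)
    with Suc show ?case by (simp add: payoff_Suc)
  qed simp
  then show ?thesis by simp
qed

lemma nash_rep_open_loop:
  assumes "\<forall>j<n. (g1 j, g2 j) \<in> nash_pp A1 A2 u1 u2"
  shows "nash_rep A1 A2 u1 u2 n (\<lambda>h. g1 (length h)) (\<lambda>h. g2 (length h))"
proof -
  have "\<forall>j<n. g1 j \<in> A1 \<and> g2 j \<in> A2 \<and> best_resp1 A1 u1 (g1 j) (g2 j) \<and> best_resp2 A2 u2 (g1 j) (g2 j)"
    using assms nash_pp_subset by (blast dest: nash_pp_iff_best_resp[THEN iffD1])
  then show ?thesis
    unfolding nash_rep_def payoff_open_loop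
    by (auto intro!: strategy_open_loop payoff_deviation_open_loop1 payoff_deviation_open_loop2)
qed

section \<open>Backward induction\<close>

lemma spe_first_round_in_actions:
  "spe A1 A2 u1 u2 (Suc T) \<mu>1 \<mu>2 \<Longrightarrow> (\<mu>1 [], \<mu>2 []) \<in> A1 \<times> A2"
  using strategy_Nil[of A1 A2 A1 T \<mu>1] strategy_Nil[of A1 A2 A2 T \<mu>2] by (simp add: spe_def)

lemma spe_imp_nash_rep: "spe A1 A2 u1 u2 (Suc T) \<mu>1 \<mu>2 \<Longrightarrow> nash_rep A1 A2 u1 u2 (Suc T) \<mu>1 \<mu>2"
  unfolding spe_def by (auto simp: histories_def dest!: spec[of _ 0])

lemma spe_subgame:
  assumes spe: "spe A1 A2 u1 u2 (Suc T) \<mu>1 \<mu>2" and c: "c \<in> A1 \<times> A2"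
  shows "spe A1 A2 u1 u2 T (\<lambda>h. \<mu>1 (c # h)) (\<lambda>h. \<mu>2 (c # h))"
proof -
  have "nash_rep A1 A2 u1 u2 (T - k) (\<lambda>h'. \<mu>1 (c # h @ h')) (\<lambda>h'. \<mu>2 (c # h @ h'))"
    if "k < T" "h \<in> histories A1 A2 k" for k h
  proof -
    have "c # h \<in> histories A1 A2 (Suc k)" using that c by (simp add: histories_def)
    then show ?thesis using spe \<open>k < T\<close> unfolding spe_def by fastforce
  qed
  then show ?thesis using spe c by (simp add: spe_def strategy_Cons)
qed

lemma best_resp1_first_round:
  assumes eq: "nash_rep A1 A2 u1 u2 (Suc T) \<mu>1 \<mu>2"
    and const: "\<forall>b\<in>A1. payoff u1 T (\<lambda>h. \<mu>1 ((b, \<mu>2 []) # h)) (\<lambda>h. \<mu>2 ((b, \<mu>2 []) # h)) = v"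
  shows "best_resp1 A1 u1 (\<mu>1 []) (\<mu>2 [])"
proof -
  have a1: "\<mu>1 [] \<in> A1" using eq strategy_Nil unfolding nash_rep_def by blast
  have "u1 b (\<mu>2 []) \<le> u1 (\<mu>1 []) (\<mu>2 [])" if b: "b \<in> A1" for b
  proof -
    define \<sigma> where "\<sigma> h = (if h = [] then b else \<mu>1 h)" for h
    have "strategy A1 A2 A1 (Suc T) \<sigma>"
      using eq b by (auto simp: \<sigma>_def nash_rep_def strategy_def)
    then have "payoff u1 (Suc T) \<sigma> \<mu>2 \<le> payoff u1 (Suc T) \<mu>1 \<mu>2"
      using eq by (simp add: nash_rep_def)
    then show ?thesis using const b a1 by (simp add: payoff_Suc_Cons \<sigma>_def)
  qed
  with a1 show ?thesis by (simp add: best_resp1_def)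
qed

lemma best_resp2_first_round:
  assumes eq: "nash_rep A1 A2 u1 u2 (Suc T) \<mu>1 \<mu>2"
    and const: "\<forall>b\<in>A2. payoff u2 T (\<lambda>h. \<mu>1 ((\<mu>1 [], b) # h)) (\<lambda>h. \<mu>2 ((\<mu>1 [], b) # h)) = v"
  shows "best_resp2 A2 u2 (\<mu>1 []) (\<mu>2 [])"
proof -
  have a2: "\<mu>2 [] \<in> A2" using eq strategy_Nil unfolding nash_rep_def by blast
  have "u2 (\<mu>1 []) b \<le> u2 (\<mu>1 []) (\<mu>2 [])" if b: "b \<in> A2" for b
  proof -
    define \<sigma> where "\<sigma> h = (if h = [] then b else \<mu>2 h)" for h
    have "strategy A1 A2 A2 (Suc T) \<sigma>"
      using eq b by (auto simp: \<sigma>_def nash_rep_def strategy_def)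
    then have "payoff u2 (Suc T) \<mu>1 \<sigma> \<le> payoff u2 (Suc T) \<mu>1 \<mu>2"
      using eq by (simp add: nash_rep_def)
    then show ?thesis using const b a2 by (simp add: payoff_Suc_Cons \<sigma>_def)
  qed
  with a2 show ?thesis by (simp add: best_resp2_def)
qed

lemma spe_imp_nash_pp_nonempty:
  "spe A1 A2 u1 u2 (Suc T) \<mu>1 \<mu>2 \<Longrightarrow> nash_pp A1 A2 u1 u2 \<noteq> {}"
proof (induction T arbitrary: \<mu>1 \<mu>2)
  case 0
  then have "nash_rep A1 A2 u1 u2 (Suc 0) \<mu>1 \<mu>2" by (rule spe_imp_nash_rep)
  then have "(\<mu>1 [], \<mu>2 []) \<in> nash_pp A1 A2 u1 u2"
    by (simp add: nash_pp_iff_best_resp best_resp1_first_round[where v = 0]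
        best_resp2_first_round[where v = 0])
  then show ?case by blast
next
  case (Suc T)
  then show ?case using spe_subgame spe_first_round_in_actions by blast
qed

definition admissible :: "'a set \<Rightarrow> 'b set \<Rightarrow> ('a \<Rightarrow> 'b \<Rightarrow> real) \<Rightarrow> ('a \<Rightarrow> 'b \<Rightarrow> real) \<Rightarrow> 'a \<Rightarrow> 'b \<Rightarrow> bool" where
  "admissible A1 A2 u1 u2 a1 a2 \<longleftrightarrow> a1 \<in> A1 \<and> a2 \<in> A2 \<and>
     (card (V1_pp A1 A2 u1 u2) = 1 \<longrightarrow> best_resp1 A1 u1 a1 a2) \<and>
     (card (V2_pp A1 A2 u1 u2) = 1 \<longrightarrow> best_resp2 A2 u2 a1 a2)"

lemma spe_plays_nash:
  assumes adm_nash: "\<forall>a1 a2. admissible A1 A2 u1 u2 a1 a2 \<longrightarrow> (a1, a2) \<in> nash_pp A1 A2 u1 u2"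
  shows "spe A1 A2 u1 u2 T \<mu>1 \<mu>2 \<Longrightarrow>
     (\<forall>k<T. \<forall>h\<in>histories A1 A2 k. (\<mu>1 h, \<mu>2 h) \<in> nash_pp A1 A2 u1 u2) \<and>
     (card (V1_pp A1 A2 u1 u2) = 1 \<longrightarrow> payoff u1 T \<mu>1 \<mu>2 = real T * the_elem (V1_pp A1 A2 u1 u2)) \<and>
     (card (V2_pp A1 A2 u1 u2) = 1 \<longrightarrow> payoff u2 T \<mu>1 \<mu>2 = real T * the_elem (V2_pp A1 A2 u1 u2))"
proof (induction T arbitrary: \<mu>1 \<mu>2)
  case (Suc T)
  let ?N = "nash_pp A1 A2 u1 u2" and ?V1 = "V1_pp A1 A2 u1 u2" and ?V2 = "V2_pp A1 A2 u1 u2"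
  have sub: "(\<forall>k<T. \<forall>h\<in>histories A1 A2 k. (\<mu>1 (c # h), \<mu>2 (c # h)) \<in> ?N) \<and>
      (card ?V1 = 1 \<longrightarrow> payoff u1 T (\<lambda>h. \<mu>1 (c # h)) (\<lambda>h. \<mu>2 (c # h)) = real T * the_elem ?V1) \<and>
      (card ?V2 = 1 \<longrightarrow> payoff u2 T (\<lambda>h. \<mu>1 (c # h)) (\<lambda>h. \<mu>2 (c # h)) = real T * the_elem ?V2)"
    if "c \<in> A1 \<times> A2" for c
    using Suc.IH[OF spe_subgame[OF Suc.prems that]] .
  have root: "(\<mu>1 [], \<mu>2 []) \<in> A1 \<times> A2" using Suc.prems by (rule spe_first_round_in_actions)
  have eq: "nash_rep A1 A2 u1 u2 (Suc T) \<mu>1 \<mu>2" using Suc.prems by (rule spe_imp_nash_rep)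
  have "admissible A1 A2 u1 u2 (\<mu>1 []) (\<mu>2 [])"
    unfolding admissible_def
  proof (intro conjI impI)
    assume "card ?V1 = 1"
    then show "best_resp1 A1 u1 (\<mu>1 []) (\<mu>2 [])"
      using root sub by (intro best_resp1_first_round[OF eq]) auto
  next
    assume "card ?V2 = 1"
    then show "best_resp2 A2 u2 (\<mu>1 []) (\<mu>2 [])"
      using root sub by (intro best_resp2_first_round[OF eq]) auto
  qed (use root in auto)
  then have root_nash: "(\<mu>1 [], \<mu>2 []) \<in> ?N" using adm_nash by blast
  have "(\<mu>1 h, \<mu>2 h) \<in> ?N" if "k < Suc T" "h \<in> histories A1 A2 k" for k h
  proof (cases h)
    case (Cons c h')
    then show ?thesis using that sub[of c] by (auto simp: histories_def)
  qed (use root_nash in simp)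
  moreover have "payoff u1 (Suc T) \<mu>1 \<mu>2 = real (Suc T) * the_elem ?V1" if "card ?V1 = 1"
    using sub[OF root] that nash_payoff1_eq_the_elem[OF root_nash]
    by (simp add: payoff_Suc_Cons algebra_simps)
  moreover have "payoff u2 (Suc T) \<mu>1 \<mu>2 = real (Suc T) * the_elem ?V2" if "card ?V2 = 1"
    using sub[OF root] that nash_payoff2_eq_the_elem[OF root_nash]
    by (simp add: payoff_Suc_Cons algebra_simps)
  ultimately show ?case by blast
qed simp

section \<open>Rewards and punishments\<close>

lemma eventually_deterrent1:
  assumes fin: "finite A1" "finite A2" and ne: "nash_pp A1 A2 u1 u2 \<noteq> {}"
    and br: "card (V1_pp A1 A2 u1 u2) = 1 \<longrightarrow> best_resp1 A1 u1 a1 a2"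
  shows "\<exists>x\<in>nash_pp A1 A2 u1 u2. \<exists>x'\<in>nash_pp A1 A2 u1 u2. \<forall>\<^sub>F m in sequentially.
           \<forall>b\<in>A1. u1 b a2 + real m * case_prod u1 x' \<le> u1 a1 a2 + real m * case_prod u1 x"
proof (cases "card (V1_pp A1 A2 u1 u2) = 1")
  case True
  obtain x where "x \<in> nash_pp A1 A2 u1 u2" using ne by blast
  with True br show ?thesis by (auto simp: best_resp1_def intro!: bexI[of _ x])
next
  case False
  have "V1_pp A1 A2 u1 u2 \<noteq> {}" using ne by (simp add: V1_pp_def)
  then have "1 < card (V1_pp A1 A2 u1 u2)"
    using False finite_V1_pp[OF fin] by (simp add: card_gt_0_iff less_le Suc_le_eq)
  then obtain x x' where x: "x \<in> nash_pp A1 A2 u1 u2" "x' \<in> nash_pp A1 A2 u1 u2"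
    and less: "case_prod u1 x' < case_prod u1 x"
    using card_gt_1_imp_less[OF finite_V1_pp[OF fin]] unfolding V1_pp_def by fastforce
  have "\<forall>\<^sub>F m in sequentially. \<forall>b\<in>A1. u1 b a2 - u1 a1 a2 \<le> real m * (case_prod u1 x - case_prod u1 x')"
    using less by (intro eventually_le_multiple fin) simp
  then have "\<forall>\<^sub>F m in sequentially.
      \<forall>b\<in>A1. u1 b a2 + real m * case_prod u1 x' \<le> u1 a1 a2 + real m * case_prod u1 x"
    by eventually_elim (simp add: algebra_simps)
  with x show ?thesis by blast
qed

lemma eventually_deterrent2:
  assumes fin: "finite A1" "finite A2" and ne: "nash_pp A1 A2 u1 u2 \<noteq> {}"
    and br: "card (V2_pp A1 A2 u1 u2) = 1 \<longrightarrow> best_resp2 A2 u2 a1 a2"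
  shows "\<exists>y\<in>nash_pp A1 A2 u1 u2. \<exists>y'\<in>nash_pp A1 A2 u1 u2. \<forall>\<^sub>F m in sequentially.
           \<forall>b\<in>A2. u2 a1 b + real m * case_prod u2 y' \<le> u2 a1 a2 + real m * case_prod u2 y"
proof (cases "card (V2_pp A1 A2 u1 u2) = 1")
  case True
  obtain y where "y \<in> nash_pp A1 A2 u1 u2" using ne by blast
  with True br show ?thesis by (auto simp: best_resp2_def intro!: bexI[of _ y])
next
  case False
  have "V2_pp A1 A2 u1 u2 \<noteq> {}" using ne by (simp add: V2_pp_def)
  then have "1 < card (V2_pp A1 A2 u1 u2)"
    using False finite_V2_pp[OF fin] by (simp add: card_gt_0_iff less_le Suc_le_eq)
  then obtain y y' where y: "y \<in> nash_pp A1 A2 u1 u2" "y' \<in> nash_pp A1 A2 u1 u2"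
    and less: "case_prod u2 y' < case_prod u2 y"
    using card_gt_1_imp_less[OF finite_V2_pp[OF fin]] unfolding V2_pp_def by fastforce
  have "\<forall>\<^sub>F m in sequentially. \<forall>b\<in>A2. u2 a1 b - u2 a1 a2 \<le> real m * (case_prod u2 y - case_prod u2 y')"
    using less by (intro eventually_le_multiple fin) simp
  then have "\<forall>\<^sub>F m in sequentially.
      \<forall>b\<in>A2. u2 a1 b + real m * case_prod u2 y' \<le> u2 a1 a2 + real m * case_prod u2 y"
    by eventually_elim (simp add: algebra_simps)
  with y show ?thesis by blast
qed

lemma payoff_conditioned_on_first_round:
  "payoff u (Suc n) (\<lambda>h. case h of [] \<Rightarrow> a1 | c # h' \<Rightarrow> fst (q c (length h')))
                    (\<lambda>h. case h of [] \<Rightarrow> a2 | c # h' \<Rightarrow> snd (q c (length h')))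
   = u a1 a2 + (\<Sum>j<n. case_prod u (q (a1, a2) j))"
  using payoff_open_loop[of u n "\<lambda>j. fst (q (a1, a2) j)" "\<lambda>j. snd (q (a1, a2) j)"]
  by (simp add: payoff_Suc_Cons case_prod_beta)

lemma payoff_deviation_first_round1:
  assumes a2: "a2 \<in> A2" and q: "\<forall>c j. q c j \<in> nash_pp A1 A2 u1 u2"
    and \<sigma>: "strategy A1 A2 A1 (Suc n) \<sigma>"
  shows "payoff u1 (Suc n) \<sigma> (\<lambda>h. case h of [] \<Rightarrow> a2 | c # h' \<Rightarrow> snd (q c (length h')))
         \<le> u1 (\<sigma> []) a2 + (\<Sum>j<n. case_prod u1 (q (\<sigma> [], a2) j))"
proof -
  let ?c = "(\<sigma> [], a2)"
  have c: "?c \<in> A1 \<times> A2" using strategy_Nil[OF \<sigma>] a2 by simp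
  have "best_resp1 A1 u1 (fst (q ?c j)) (snd (q ?c j)) \<and> best_resp2 A2 u2 (fst (q ?c j)) (snd (q ?c j))" for j
    using q nash_pp_imp_best_resp by blast
  then have "\<forall>j<n. snd (q ?c j) \<in> A2 \<and> best_resp1 A1 u1 (fst (q ?c j)) (snd (q ?c j))"
    by (simp add: best_resp2_def)
  then show ?thesis
    using payoff_deviation_open_loop1[OF strategy_Cons[OF \<sigma> c], of "\<lambda>j. snd (q ?c j)" u1 "\<lambda>j. fst (q ?c j)"]
    by (simp add: payoff_Suc_Cons case_prod_beta)
qed

lemma payoff_deviation_first_round2:
  assumes a1: "a1 \<in> A1" and q: "\<forall>c j. q c j \<in> nash_pp A1 A2 u1 u2"
    and \<sigma>: "strategy A1 A2 A2 (Suc n) \<sigma>"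
  shows "payoff u2 (Suc n) (\<lambda>h. case h of [] \<Rightarrow> a1 | c # h' \<Rightarrow> fst (q c (length h'))) \<sigma>
         \<le> u2 a1 (\<sigma> []) + (\<Sum>j<n. case_prod u2 (q (a1, \<sigma> []) j))"
proof -
  let ?c = "(a1, \<sigma> [])"
  have c: "?c \<in> A1 \<times> A2" using strategy_Nil[OF \<sigma>] a1 by simp
  have "best_resp1 A1 u1 (fst (q ?c j)) (snd (q ?c j)) \<and> best_resp2 A2 u2 (fst (q ?c j)) (snd (q ?c j))" for j
    using q nash_pp_imp_best_resp by blast
  then have "\<forall>j<n. fst (q ?c j) \<in> A1 \<and> best_resp2 A2 u2 (fst (q ?c j)) (snd (q ?c j))"
    by (simp add: best_resp1_def)
  then show ?thesis
    using payoff_deviation_open_loop2[OF strategy_Cons[OF \<sigma> c], of "\<lambda>j. fst (q ?c j)" u2 "\<lambda>j. snd (q ?c j)"]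
    by (simp add: payoff_Suc_Cons case_prod_beta)
qed

lemma spe_conditioned_on_first_round:
  fixes q :: "'a \<times> 'b \<Rightarrow> nat \<Rightarrow> 'a \<times> 'b"
  assumes a: "a1 \<in> A1" "a2 \<in> A2" and q: "\<forall>c j. q c j \<in> nash_pp A1 A2 u1 u2"
    and incentive1: "\<forall>b\<in>A1. u1 b a2 + (\<Sum>j<n. case_prod u1 (q (b, a2) j))
                            \<le> u1 a1 a2 + (\<Sum>j<n. case_prod u1 (q (a1, a2) j))"
    and incentive2: "\<forall>b\<in>A2. u2 a1 b + (\<Sum>j<n. case_prod u2 (q (a1, b) j))
                            \<le> u2 a1 a2 + (\<Sum>j<n. case_prod u2 (q (a1, a2) j))"
  shows "spe A1 A2 u1 u2 (Suc n)
           (\<lambda>h. case h of [] \<Rightarrow> a1 | c # h' \<Rightarrow> fst (q c (length h')))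
           (\<lambda>h. case h of [] \<Rightarrow> a2 | c # h' \<Rightarrow> snd (q c (length h')))"
    (is "spe _ _ _ _ _ ?\<mu>1 ?\<mu>2")
proof -
  have "q c j \<in> A1 \<times> A2" for c j using q nash_pp_subset by blast
  then have strat: "strategy A1 A2 A1 T ?\<mu>1" "strategy A1 A2 A2 T ?\<mu>2" for T
    using a by (simp_all add: strategy_def mem_Times_iff split: list.split)
  have subgame: "nash_rep A1 A2 u1 u2 m (\<lambda>h'. ?\<mu>1 (c # h @ h')) (\<lambda>h'. ?\<mu>2 (c # h @ h'))" for m c h
    using nash_rep_open_loop[of m "\<lambda>j. fst (q c (length h + j))" "\<lambda>j. snd (q c (length h + j))" A1 A2 u1 u2] q
    by simp
  have "payoff u1 (Suc n) \<sigma> ?\<mu>2 \<le> payoff u1 (Suc n) ?\<mu>1 ?\<mu>2" if "strategy A1 A2 A1 (Suc n) \<sigma>" for \<sigma>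
    using order.trans[OF payoff_deviation_first_round1[OF a(2) q that] bspec[OF incentive1 strategy_Nil[OF that]]]
    by (simp add: payoff_conditioned_on_first_round)
  moreover have "payoff u2 (Suc n) ?\<mu>1 \<sigma> \<le> payoff u2 (Suc n) ?\<mu>1 ?\<mu>2" if "strategy A1 A2 A2 (Suc n) \<sigma>" for \<sigma>
    using order.trans[OF payoff_deviation_first_round2[OF a(1) q that] bspec[OF incentive2 strategy_Nil[OF that]]]
    by (simp add: payoff_conditioned_on_first_round)
  ultimately have root: "nash_rep A1 A2 u1 u2 (Suc n) ?\<mu>1 ?\<mu>2"
    using strat by (simp add: nash_rep_def)
  show ?thesis
    unfolding spe_def
  proof (intro conjI strat allI impI ballI)
    fix k and h :: "('a \<times> 'b) list"
    assume "h \<in> histories A1 A2 k"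
    show "nash_rep A1 A2 u1 u2 (Suc n - k) (\<lambda>h'. ?\<mu>1 (h @ h')) (\<lambda>h'. ?\<mu>2 (h @ h'))"
    proof (cases h)
      case Nil
      with root \<open>h \<in> histories A1 A2 k\<close> show ?thesis by (simp add: histories_def)
    next
      case (Cons c h')
      with subgame show ?thesis by simp
    qed
  qed
qed

lemma spe_with_admissible_first_round:
  assumes fin: "finite A1" "finite A2" and ne: "nash_pp A1 A2 u1 u2 \<noteq> {}"
    and adm: "admissible A1 A2 u1 u2 a1 a2"
  shows "\<exists>n \<mu>1 \<mu>2. spe A1 A2 u1 u2 (Suc n) \<mu>1 \<mu>2 \<and> \<mu>1 [] = a1 \<and> \<mu>2 [] = a2"
proof -
  obtain x x' where nash1: "x \<in> nash_pp A1 A2 u1 u2" "x' \<in> nash_pp A1 A2 u1 u2"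
    and ev1: "\<forall>\<^sub>F m in sequentially.
      \<forall>b\<in>A1. u1 b a2 + real m * case_prod u1 x' \<le> u1 a1 a2 + real m * case_prod u1 x"
    using eventually_deterrent1[OF fin ne] adm unfolding admissible_def by blast
  obtain y y' where nash2: "y \<in> nash_pp A1 A2 u1 u2" "y' \<in> nash_pp A1 A2 u1 u2"
    and ev2: "\<forall>\<^sub>F m in sequentially.
      \<forall>b\<in>A2. u2 a1 b + real m * case_prod u2 y' \<le> u2 a1 a2 + real m * case_prod u2 y"
    using eventually_deterrent2[OF fin ne] adm unfolding admissible_def by blast
  obtain m where
    deter1: "\<forall>b\<in>A1. u1 b a2 + real m * case_prod u1 x' \<le> u1 a1 a2 + real m * case_prod u1 x" and
    deter2: "\<forall>b\<in>A2. u2 a1 b + real m * case_prod u2 y' \<le> u2 a1 a2 + real m * case_prod u2 y"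
    using eventually_happens'[OF _ eventually_conj[OF ev1 ev2]] by auto
  \<comment> \<open>The first m rounds reward or punish player 1's first-round action, the last m rounds player 2's.\<close>
  define q where
    "q c j = (if j < m then if fst c = a1 then x else x' else if snd c = a2 then y else y')" for c j
  have sum_q: "(\<Sum>j<m + m. f (q c j)) =
      real m * f (if fst c = a1 then x else x') + real m * f (if snd c = a2 then y else y')"
    for f :: "'a \<times> 'b \<Rightarrow> real" and c
    by (simp add: q_def if_distrib sum_two_blocks)
  have "spe A1 A2 u1 u2 (Suc (m + m))
      (\<lambda>h. case h of [] \<Rightarrow> a1 | c # h' \<Rightarrow> fst (q c (length h')))
      (\<lambda>h. case h of [] \<Rightarrow> a2 | c # h' \<Rightarrow> snd (q c (length h')))"
  proof (rule spe_conditioned_on_first_round)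
    show "\<forall>c j. q c j \<in> nash_pp A1 A2 u1 u2" using nash1 nash2 by (simp add: q_def)
    show "\<forall>b\<in>A1. u1 b a2 + (\<Sum>j<m + m. case_prod u1 (q (b, a2) j))
                 \<le> u1 a1 a2 + (\<Sum>j<m + m. case_prod u1 (q (a1, a2) j))"
      using deter1 by (auto simp: sum_q)
    show "\<forall>b\<in>A2. u2 a1 b + (\<Sum>j<m + m. case_prod u2 (q (a1, b) j))
                 \<le> u2 a1 a2 + (\<Sum>j<m + m. case_prod u2 (q (a1, a2) j))"
      using deter2 by (auto simp: sum_q)
  qed (use adm in \<open>simp_all add: admissible_def\<close>)
  then show ?thesis by fastforce
qed

lemma suboptimality_conditions_iff:
  fixes A1 :: "'a set" and A2 :: "'b set" and u1 u2 :: "'a \<Rightarrow> 'b \<Rightarrow> real"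
  assumes fin: "finite A1" "finite A2" and ne: "nash_pp A1 A2 u1 u2 \<noteq> {}"
  shows "((card (V1_pp A1 A2 u1 u2) > 1 \<and> card (V2_pp A1 A2 u1 u2) > 1 \<and>
        (\<exists>a1\<in>A1. \<exists>a2\<in>A2. (a1, a2) \<notin> nash_pp A1 A2 u1 u2))
    \<or> (card (V1_pp A1 A2 u1 u2) > 1 \<and> card (V2_pp A1 A2 u1 u2) = 1 \<and>
        (\<exists>a1\<in>A1. \<exists>a1'\<in>A1. \<exists>a2\<in>A2. u1 a1 a2 < u1 a1' a2 \<and> best_resp2 A2 u2 a1 a2))
    \<or> (card (V1_pp A1 A2 u1 u2) = 1 \<and> card (V2_pp A1 A2 u1 u2) > 1 \<and>
        (\<exists>a1\<in>A1. \<exists>a2\<in>A2. \<exists>a2'\<in>A2. u2 a1 a2 < u2 a1 a2' \<and> best_resp1 A1 u1 a1 a2)))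
    \<longleftrightarrow> (\<exists>a1 a2. admissible A1 A2 u1 u2 a1 a2 \<and> (a1, a2) \<notin> nash_pp A1 A2 u1 u2)"
    (is "?R \<longleftrightarrow> ?A")
proof -
  have "V1_pp A1 A2 u1 u2 \<noteq> {}" "V2_pp A1 A2 u1 u2 \<noteq> {}"
    using ne by (simp_all add: V1_pp_def V2_pp_def)
  then have card_pos: "card (V1_pp A1 A2 u1 u2) \<noteq> 0" "card (V2_pp A1 A2 u1 u2) \<noteq> 0"
    using finite_V1_pp[OF fin] finite_V2_pp[OF fin] by simp_all
  show ?thesis
  proof
    assume ?R
    then show ?A
    proof (elim disjE conjE bexE)
      fix a1 a2 assume "1 < card (V1_pp A1 A2 u1 u2)" "1 < card (V2_pp A1 A2 u1 u2)"
        "a1 \<in> A1" "a2 \<in> A2" "(a1, a2) \<notin> nash_pp A1 A2 u1 u2"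
      then show ?A by (auto simp: admissible_def)
    next
      fix a1 a1' a2 assume "1 < card (V1_pp A1 A2 u1 u2)" "a1 \<in> A1" "a1' \<in> A1" "a2 \<in> A2"
        "u1 a1 a2 < u1 a1' a2" "best_resp2 A2 u2 a1 a2"
      then show ?A using not_nash_if_better_reply1[of a1' A1 u1 a1 a2]
        by (intro exI[of _ a1] exI[of _ a2]) (simp add: admissible_def)
    next
      fix a1 a2 a2' assume "1 < card (V2_pp A1 A2 u1 u2)" "a1 \<in> A1" "a2 \<in> A2" "a2' \<in> A2"
        "u2 a1 a2 < u2 a1 a2'" "best_resp1 A1 u1 a1 a2"
      then show ?A using not_nash_if_better_reply2[of a2' A2 u2 a1 a2]
        by (intro exI[of _ a1] exI[of _ a2]) (simp add: admissible_def)
    qed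
  next
    assume ?A
    then obtain a1 a2 where adm: "admissible A1 A2 u1 u2 a1 a2"
      and not_nash: "(a1, a2) \<notin> nash_pp A1 A2 u1 u2" by blast
    then have a: "a1 \<in> A1" "a2 \<in> A2" by (simp_all add: admissible_def)
    consider "card (V1_pp A1 A2 u1 u2) = 1" "card (V2_pp A1 A2 u1 u2) = 1"
      | "card (V1_pp A1 A2 u1 u2) = 1" "1 < card (V2_pp A1 A2 u1 u2)"
      | "1 < card (V1_pp A1 A2 u1 u2)" "card (V2_pp A1 A2 u1 u2) = 1"
      | "1 < card (V1_pp A1 A2 u1 u2)" "1 < card (V2_pp A1 A2 u1 u2)"
      using card_pos by linarith
    then show ?R
    proof cases
      case 1
      with adm not_nash show ?thesis by (simp add: admissible_def nash_pp_iff_best_resp)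
    next
      case 2
      with adm not_nash a show ?thesis
        by (auto simp: admissible_def nash_pp_iff_best_resp best_resp2_def not_le)
    next
      case 3
      with adm not_nash a show ?thesis
        by (auto simp: admissible_def nash_pp_iff_best_resp best_resp1_def not_le)
    next
      case 4
      with not_nash a show ?thesis by blast
    qed
  qed
qed

theorem mainTheorem1:
  fixes A1 :: "'a set" and A2 :: "'b set" and u1 u2 :: "'a \<Rightarrow> 'b \<Rightarrow> real"
  assumes "finite A1" "A1 \<noteq> {}" "finite A2" "A2 \<noteq> {}"
  shows "(\<exists>T::nat. T \<ge> 1 \<and> (\<exists>\<mu>1 \<mu>2. spe A1 A2 u1 u2 T \<mu>1 \<mu>2 \<and>
             locally_suboptimal A1 A2 u1 u2 T \<mu>1 \<mu>2))
    \<longleftrightarrow>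
     ((card (V1_pp A1 A2 u1 u2) > 1 \<and> card (V2_pp A1 A2 u1 u2) > 1 \<and>
        (\<exists>a1\<in>A1. \<exists>a2\<in>A2. (a1, a2) \<notin> nash_pp A1 A2 u1 u2))
    \<or> (card (V1_pp A1 A2 u1 u2) > 1 \<and> card (V2_pp A1 A2 u1 u2) = 1 \<and>
        (\<exists>a1\<in>A1. \<exists>a1'\<in>A1. \<exists>a2\<in>A2. u1 a1 a2 < u1 a1' a2 \<and> best_resp2 A2 u2 a1 a2))
    \<or> (card (V1_pp A1 A2 u1 u2) = 1 \<and> card (V2_pp A1 A2 u1 u2) > 1 \<and>
        (\<exists>a1\<in>A1. \<exists>a2\<in>A2. \<exists>a2'\<in>A2. u2 a1 a2 < u2 a1 a2' \<and> best_resp1 A1 u1 a1 a2)))"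
    (is "?L \<longleftrightarrow> ?R")
proof
  assume ?L
  then obtain T \<mu>1 \<mu>2 where spe: "spe A1 A2 u1 u2 (Suc T) \<mu>1 \<mu>2"
    and "locally_suboptimal A1 A2 u1 u2 (Suc T) \<mu>1 \<mu>2"
    by (metis Suc_le_D One_nat_def)
  then obtain k h where "k < Suc T" "h \<in> histories A1 A2 k" "(\<mu>1 h, \<mu>2 h) \<notin> nash_pp A1 A2 u1 u2"
    unfolding locally_suboptimal_def by blast
  then have "\<exists>a1 a2. admissible A1 A2 u1 u2 a1 a2 \<and> (a1, a2) \<notin> nash_pp A1 A2 u1 u2"
    using spe_plays_nash[OF _ spe] by blast
  then show ?R
    using suboptimality_conditions_iff[OF assms(1,3) spe_imp_nash_pp_nonempty[OF spe]] by blast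
next
  assume ?R
  then have ne: "nash_pp A1 A2 u1 u2 \<noteq> {}" by (auto simp: V1_pp_def)
  then obtain a1 a2 where "admissible A1 A2 u1 u2 a1 a2" "(a1, a2) \<notin> nash_pp A1 A2 u1 u2"
    using suboptimality_conditions_iff[OF assms(1,3) ne] \<open>?R\<close> by blast
  moreover from this(1) obtain n \<mu>1 \<mu>2 where "spe A1 A2 u1 u2 (Suc n) \<mu>1 \<mu>2" "\<mu>1 [] = a1" "\<mu>2 [] = a2"
    using spe_with_admissible_first_round[OF assms(1,3) ne] by blast
  moreover have "[] \<in> histories A1 A2 0" by (simp add: histories_def)
  ultimately show ?L
    unfolding locally_suboptimal_def by (metis zero_less_Suc le_add1 plus_1_eq_Suc)
qed

end
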